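(* Let $N\ge 1$, $\alpha=(\alpha_1,\dots,\alpha_N)\in\mathbb R^N$, and let $\dot W$ be a real symmetric $N\times N$ matrix with $\dot W_{ij}\ge 0$ for $i\neq j$ and $\sum_{j=1}^N\dot W_{ij}=0$ for every $i$. Put $W_\varepsilon=\mathrm{Id}+\varepsilon\dot W$ and let $\mathcal P_\varepsilon$ be the operator defined in the context. Fix $k\in\mathbb Z$. (1) For every $\varepsilon>0$, the operator $\mathcal P_\varepsilon:L^2(M)\to L^2(M)$ has $N$ eigenvalues $\lambda^{(1)}_{k,\varepsilon},\dots,\lambda^{(N)}_{k,\varepsilon}$ (counted with algebraic multiplicity) with $N$ linearly independent (generalised) eigenfunctions $F^{(\ell)}_{k,\varepsilon}$ of the separable form $F^{(\ell)}_{k,\varepsilon}(j,x)=f^{(\ell)}_{k,\varepsilon}(j)\,e^{2\pi i k x}$, $\ell=1,\dots,N$, where $f^{(\ell)}_{k,\varepsilon}:\{1,\dots,N\}\to\mathbb C$. (2) For all sufficiently small $\varepsilon>0$, these eigenvalues can be labelled so that $$\bigl|\lambda^{(\ell)}_{k,\varepsilon}-e^{-2\pi i k\alpha_\ell}\bigr|\le 2\max_{1\le m\le N}|\dot W_{mm}|\,\varepsilon\qquad\text{for all }\ell\in\{1,\dots,N\}.$$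
   Context: $\mathbb S^1=\mathbb R/\mathbb Z$, $M=\{1,\dots,N\}\times\mathbb S^1$, equipped with the product $m$ of the uniform probability measure on $\{1,\dots,N\}$ and Lebesgue measure on $\mathbb S^1$; $L^2(M)$ is the complex Hilbert space $L^2(M,m)$. For $\varepsilon\ge 0$ the (noisy rotation) transfer operator is $(\mathcal P_\varepsilon F)(j,x)=\sum_{j'=1}^N (W_\varepsilon)_{jj'}\,F(j',x-\alpha_j)$ for $F\in L^2(M)$, $(j,x)\in M$. A generalised eigenfunction with eigenvalue $\lambda$ is a nonzero $F$ with $(\mathcal P_\varepsilon-\lambda)^nF=0$ for some $n\ge1$. *)

theory Defs
  imports "HOL-Analysis.Analysis"
begin

text \<open>Points of M = {1..N} x S^1 are pairs (j, x) with j in {1..N} and x in [0,1)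
  (representing R/Z).  Elements of L^2(M) are represented by functions
  F :: nat => real => complex (only the values on {1..N} x [0,1) matter),
  and equality in L^2(M) is equality almost everywhere.\<close>

definition L2_mem :: "nat \<Rightarrow> (nat \<Rightarrow> real \<Rightarrow> complex) \<Rightarrow> bool" where
  "L2_mem N F \<longleftrightarrow> (\<forall>j\<in>{1..N}.
      F j \<in> borel_measurable (lebesgue_on {0..<1}) \<and>
      integrable (lebesgue_on {0..<1}) (\<lambda>x. (cmod (F j x))\<^sup>2))"

definition L2_zero :: "nat \<Rightarrow> (nat \<Rightarrow> real \<Rightarrow> complex) \<Rightarrow> bool" where
  "L2_zero N F \<longleftrightarrow> (\<forall>j\<in>{1..N}. AE x in lebesgue_on {0..<1}. F j x = 0)"

definition transfer_op ::
  "nat \<Rightarrow> (nat \<Rightarrow> nat \<Rightarrow> real) \<Rightarrow> (nat \<Rightarrow> real) \<Rightarrow> (nat \<Rightarrow> real \<Rightarrow> complex) \<Rightarrow> (nat \<Rightarrow> real \<Rightarrow> complex)" where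
  "transfer_op N W \<alpha> F = (\<lambda>j x. \<Sum>j'=1..N. complex_of_real (W j j') * F j' (frac (x - \<alpha> j)))"

definition W_eps :: "(nat \<Rightarrow> nat \<Rightarrow> real) \<Rightarrow> real \<Rightarrow> nat \<Rightarrow> nat \<Rightarrow> real" where
  "W_eps Wd \<epsilon> = (\<lambda>i j. (if i = j then 1 else 0) + \<epsilon> * Wd i j)"

definition gen_eigenfunction ::
  "nat \<Rightarrow> (nat \<Rightarrow> nat \<Rightarrow> real) \<Rightarrow> (nat \<Rightarrow> real) \<Rightarrow> complex \<Rightarrow> (nat \<Rightarrow> real \<Rightarrow> complex) \<Rightarrow> bool" where
  "gen_eigenfunction N W \<alpha> lam F \<longleftrightarrow>
     L2_mem N F \<and> \<not> L2_zero N F \<and>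
     (\<exists>n\<ge>1. L2_zero N (((\<lambda>G j x. transfer_op N W \<alpha> G j x - lam * G j x) ^^ n) F))"

definition L2_lin_indep :: "nat \<Rightarrow> (nat \<Rightarrow> nat \<Rightarrow> real \<Rightarrow> complex) \<Rightarrow> bool" where
  "L2_lin_indep N Fs \<longleftrightarrow>
     (\<forall>c :: nat \<Rightarrow> complex. L2_zero N (\<lambda>j x. \<Sum>l=1..N. c l * Fs l j x) \<longrightarrow> (\<forall>l\<in>{1..N}. c l = 0))"

definition sep_fun :: "int \<Rightarrow> (nat \<Rightarrow> complex) \<Rightarrow> nat \<Rightarrow> real \<Rightarrow> complex" where
  "sep_fun k f = (\<lambda>j x. f j * exp (2 * of_real pi * \<i> * of_int k * of_real x))"

definition sep_eigen_system ::
  "nat \<Rightarrow> (nat \<Rightarrow> nat \<Rightarrow> real) \<Rightarrow> (nat \<Rightarrow> real) \<Rightarrow> int \<Rightarrow> (nat \<Rightarrow> complex) \<Rightarrow> (nat \<Rightarrow> nat \<Rightarrow> complex) \<Rightarrow> bool" where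
  "sep_eigen_system N W \<alpha> k lam f \<longleftrightarrow>
     L2_lin_indep N (\<lambda>l. sep_fun k (f l)) \<and>
     (\<forall>l\<in>{1..N}. gen_eigenfunction N W \<alpha> (lam l) (sep_fun k (f l)))"

end

theory Submission
  imports Defs "Jordan_Normal_Form.Jordan_Normal_Form_Existence"
begin

text \<open>Write e(x) = exp(2 pi i x). Functions f(j) e(kx) form an N-dimensional subspace invariant
  under the transfer operator, which acts on it as the matrix D W with D = diag(e(-k alpha_j)); a
  Jordan basis of this matrix gives N linearly independent separable generalised eigenfunctions.
  Since Wd has nonnegative off-diagonal entries and zero row sums, the Gershgorin disc of row l of
  D (Id + eps Wd) lies within 2 eps |Wd_ll| of e(-k alpha_l). As eps -> 0 the characteristic polynomial
  converges to the product of the z - e(-k alpha_l), and comparing both at a point slightly off each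
  e(-k alpha_l) shows that no such value attracts more eigenvalues than its multiplicity; hence
  the eigenvalues can be labelled as claimed.\<close>

unbundle no vec_syntax \<comment> \<open>so that $ is the vector indexing of Jordan_Normal_Form\<close>

section \<open>Generalised eigenvectors from the Jordan normal form\<close>

lemma funpow_mult_mat_vec_carrier:
  assumes "B \<in> carrier_mat n n" "v \<in> carrier_vec n"
  shows "((\<lambda>v. B *\<^sub>v v) ^^ m) v \<in> carrier_vec n"
  using assms by (induction m) auto

lemma nonzero_vec_index:
  assumes "v \<in> carrier_vec n" "v \<noteq> 0\<^sub>v n"
  obtains j where "j < n" "v $ j \<noteq> 0"
proof -
  have "\<not> (\<forall>j<n. v $ j = 0)"
  proof
    assume "\<forall>j<n. v $ j = 0"
    then have "v = 0\<^sub>v n" using assms(1) by (intro eq_vecI) auto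
    then show False using assms(2) by simp
  qed
  then show thesis using that by blast
qed

lemma jordan_matrix_diag_eq_if_nonzero:
  assumes "a < b" "b < sum_list (map fst n_as)" "jordan_matrix n_as $$ (a,b) \<noteq> 0"
  shows "jordan_matrix n_as $$ (a,a) = jordan_matrix n_as $$ (b,b)"
  using assms
proof (induction n_as arbitrary: a b)
  case Nil
  then show ?case by simp
next
  case (Cons na n_as)
  obtain n x where na: "na = (n,x)" by force
  let ?s = "sum_list (map fst n_as)"
  have dims: "dim_row (jordan_block n x) = n" "dim_col (jordan_block n x) = n"
    "dim_row (jordan_matrix n_as) = ?s" "dim_col (jordan_matrix n_as) = ?s" by auto
  have b: "b < n + ?s" and a: "a < n + ?s" using Cons.prems na by auto
  note idx = index_mat_four_block(1)[of _ "jordan_block n x" "jordan_matrix n_as", unfolded dims]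
  consider "b < n" | "a < n" "n \<le> b" | "n \<le> a" by linarith
  then show ?case
  proof cases
    case 1
    then show ?thesis using Cons.prems unfolding na jordan_matrix_Cons by (simp add: idx a b)
  next
    case 2
    then show ?thesis using Cons.prems b unfolding na jordan_matrix_Cons by (simp add: idx a b)
  next
    case 3
    have "b - n < ?s" using b 3 Cons.prems(1) by linarith
    have "jordan_matrix n_as $$ (a-n,a-n) = jordan_matrix n_as $$ (b-n,b-n)"
      by (rule Cons.IH) (use Cons.prems 3 \<open>b - n < ?s\<close> in \<open>auto simp: na jordan_matrix_Cons idx a b\<close>)
    then show ?thesis using 3 Cons.prems(1) unfolding na jordan_matrix_Cons by (simp add: idx a b)
  qed
qed

lemma poly_char_poly_upper_triangular:
  fixes T :: "'a :: comm_ring_1 mat"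
  assumes "T \<in> carrier_mat n n" "upper_triangular T"
  shows "poly (char_poly T) z = (\<Prod>i<n. z - T $$ (i,i))"
proof -
  have "poly (char_poly T) z = prod_list (map (\<lambda>a. z - a) (diag_mat T))"
    by (simp add: char_poly_upper_triangular[OF assms] poly_prod_list o_def)
  also have "\<dots> = (\<Prod>i<n. z - T $$ (i,i))"
    using assms(1) by (simp add: diag_mat_def prod.distinct_set_conv_list[symmetric] atLeast0LessThan)
  finally show ?thesis .
qed

text \<open>The nilpotency step for Jordan-like matrices: T - \<mu> moves the support of a vector living on
  indices with diagonal entry \<mu> strictly upwards.\<close>
lemma upper_triangular_shift_support:
  fixes T :: "'a :: comm_ring_1 mat"
  assumes T: "T \<in> carrier_mat n n" and ut: "upper_triangular T"
    and diag_eq: "\<And>a b. a < b \<Longrightarrow> b < n \<Longrightarrow> T $$ (a,b) \<noteq> 0 \<Longrightarrow> T $$ (a,a) = T $$ (b,b)"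
    and v: "v \<in> carrier_vec n"
    and supp: "\<And>a. a < n \<Longrightarrow> v $ a \<noteq> 0 \<Longrightarrow> a + s \<le> i \<and> T $$ (a,a) = \<mu>"
    and a: "a < n" and nz: "((T - \<mu> \<cdot>\<^sub>m 1\<^sub>m n) *\<^sub>v v) $ a \<noteq> 0"
  shows "a + Suc s \<le> i \<and> T $$ (a,a) = \<mu>"
proof -
  have "((T - \<mu> \<cdot>\<^sub>m 1\<^sub>m n) *\<^sub>v v) $ a = (\<Sum>b<n. (T $$ (a,b) - (if a = b then \<mu> else 0)) * v $ b)"
    using T v a by (auto simp: scalar_prod_def lessThan_atLeast0 intro!: sum.cong)
  with nz obtain b where b: "b < n" and nz_b: "(T $$ (a,b) - (if a = b then \<mu> else 0)) * v $ b \<noteq> 0"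
    by (metis (no_types, lifting) lessThan_iff sum.neutral)
  then have "v $ b \<noteq> 0" by auto
  with b have hb: "b + s \<le> i" "T $$ (b,b) = \<mu>" using supp by auto
  have "a < b"
  proof (rule ccontr)
    assume "\<not> a < b"
    then have "T $$ (a,b) - (if a = b then \<mu> else 0) = 0"
      using ut T a hb unfolding upper_triangular_def by (cases "a = b") auto
    then show False using nz_b by simp
  qed
  moreover have "T $$ (a,b) \<noteq> 0" using nz_b calculation by auto
  ultimately show ?thesis using diag_eq[OF _ b] hb by auto
qed

lemma upper_triangular_unit_vec_generalised_eigenvector:
  fixes T :: "'a :: comm_ring_1 mat"
  assumes T: "T \<in> carrier_mat n n" and ut: "upper_triangular T"
    and diag_eq: "\<And>a b. a < b \<Longrightarrow> b < n \<Longrightarrow> T $$ (a,b) \<noteq> 0 \<Longrightarrow> T $$ (a,a) = T $$ (b,b)"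
    and i: "i < n"
  shows "((\<lambda>v. (T - T $$ (i,i) \<cdot>\<^sub>m 1\<^sub>m n) *\<^sub>v v) ^^ n) (unit_vec n i) = 0\<^sub>v n"
proof -
  let ?f = "\<lambda>v. (T - T $$ (i,i) \<cdot>\<^sub>m 1\<^sub>m n) *\<^sub>v v"
  have carrier: "(?f ^^ s) (unit_vec n i) \<in> carrier_vec n" for s
    by (rule funpow_mult_mat_vec_carrier) (use T in auto)
  have supp: "a + s \<le> i" if "a < n" "(?f ^^ s) (unit_vec n i) $ a \<noteq> 0" for s a
  proof -
    have "a + s \<le> i \<and> T $$ (a,a) = T $$ (i,i)" using that
    proof (induction s arbitrary: a)
      case 0
      then show ?case using i by (auto simp: unit_vec_def split: if_splits)
    next
      case (Suc s)
      show ?case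
        by (rule upper_triangular_shift_support[OF T ut diag_eq carrier Suc.IH Suc.prems(1)])
          (use Suc.prems(2) in auto)
    qed
    then show ?thesis ..
  qed
  show ?thesis
  proof (rule eq_vecI)
    fix a assume "a < dim_vec (0\<^sub>v n)"
    moreover have "\<not> a + n \<le> i" using i by simp
    ultimately show "(?f ^^ n) (unit_vec n i) $ a = 0\<^sub>v n $ a" using supp[of a n] by auto
  qed (use carrier[of n] in simp)
qed

lemma similar_funpow_shifted_mult_mat_vec:
  fixes A :: "'a :: comm_ring_1 mat"
  assumes P: "P \<in> carrier_mat n n" and Q: "Q \<in> carrier_mat n n" and J: "J \<in> carrier_mat n n"
    and QP: "Q * P = 1\<^sub>m n" and A: "A = P * J * Q" and w: "w \<in> carrier_vec n"
  shows "((\<lambda>v. (A - c \<cdot>\<^sub>m 1\<^sub>m n) *\<^sub>v v) ^^ m) (P *\<^sub>v w)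
       = P *\<^sub>v (((\<lambda>v. (J - c \<cdot>\<^sub>m 1\<^sub>m n) *\<^sub>v v) ^^ m) w)"
proof -
  have Ac: "A \<in> carrier_mat n n" using A P Q J by simp
  have "A * P = P * J * (Q * P)" unfolding A by (rule assoc_mult_mat) (use P Q J in auto)
  also have "\<dots> = P * J" using QP P J right_mult_one_mat[of "P * J" n n] by simp
  finally have AP: "A * P = P * J" .
  have "(A - c \<cdot>\<^sub>m 1\<^sub>m n) * P = A * P - c \<cdot>\<^sub>m P"
    using Ac P by (simp add: minus_mult_distrib_mat[of _ n n] mult_smult_assoc_mat[of _ n n])
  also have "\<dots> = P * J - P * (c \<cdot>\<^sub>m 1\<^sub>m n)"
    using AP P mult_smult_distrib[OF P one_carrier_mat[of n], of c] by simp
  also have "\<dots> = P * (J - c \<cdot>\<^sub>m 1\<^sub>m n)"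
    using P J by (simp add: mult_minus_distrib_mat[of _ n n])
  finally have shift: "(A - c \<cdot>\<^sub>m 1\<^sub>m n) * P = P * (J - c \<cdot>\<^sub>m 1\<^sub>m n)" .
  let ?g = "\<lambda>v. (J - c \<cdot>\<^sub>m 1\<^sub>m n) *\<^sub>v v"
  have carrier: "(?g ^^ m) w \<in> carrier_vec n" for m
    by (rule funpow_mult_mat_vec_carrier) (use J w in auto)
  show ?thesis
  proof (induction m)
    case (Suc m)
    have "((\<lambda>v. (A - c \<cdot>\<^sub>m 1\<^sub>m n) *\<^sub>v v) ^^ Suc m) (P *\<^sub>v w) = (A - c \<cdot>\<^sub>m 1\<^sub>m n) *\<^sub>v (P *\<^sub>v (?g ^^ m) w)"
      using Suc.IH by simp
    also have "\<dots> = ((A - c \<cdot>\<^sub>m 1\<^sub>m n) * P) *\<^sub>v (?g ^^ m) w"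
      by (rule assoc_mult_mat_vec[symmetric]) (use Ac P carrier in auto)
    also have "\<dots> = P *\<^sub>v ?g ((?g ^^ m) w)"
      unfolding shift by (rule assoc_mult_mat_vec) (use J P carrier in auto)
    finally show ?case by simp
  qed simp
qed

lemma complex_generalised_eigenbasis:
  fixes A :: "complex mat"
  assumes A: "A \<in> carrier_mat n n"
  obtains P Q \<mu> where "P \<in> carrier_mat n n" "Q \<in> carrier_mat n n" "Q * P = 1\<^sub>m n"
    "\<And>i. i < n \<Longrightarrow> ((\<lambda>v. (A - \<mu> i \<cdot>\<^sub>m 1\<^sub>m n) *\<^sub>v v) ^^ n) (col P i) = 0\<^sub>v n"
    "\<And>z. poly (char_poly A) z = (\<Prod>i<n. z - \<mu> i)"
proof -
  obtain as where "char_poly A = (\<Prod>a\<leftarrow>as. [:- a, 1:])" using char_poly_factorized[OF A] by blast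
  from jordan_nf_exists[OF A this] obtain n_as where "jordan_nf A n_as" by blast
  let ?J = "jordan_matrix n_as"
  have sim: "similar_mat A ?J" using \<open>jordan_nf A n_as\<close> unfolding jordan_nf_def by simp
  then obtain P Q where "similar_mat_wit A ?J P Q" unfolding similar_mat_def by blast
  then have P: "P \<in> carrier_mat n n" and Q: "Q \<in> carrier_mat n n" and J: "?J \<in> carrier_mat n n"
    and QP: "Q * P = 1\<^sub>m n" and AJ: "A = P * ?J * Q"
    using A unfolding similar_mat_wit_def Let_def by auto
  have ut: "upper_triangular ?J"
    unfolding upper_triangular_def using jordan_matrix_upper_triangular by auto
  have diag_eq: "?J $$ (a,a) = ?J $$ (b,b)" if "a < b" "b < n" "?J $$ (a,b) \<noteq> 0" for a b
    using jordan_matrix_diag_eq_if_nonzero[OF that(1) _ that(3)] that(2) J by auto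
  define \<mu> where "\<mu> i = ?J $$ (i,i)" for i
  have "((\<lambda>v. (A - \<mu> i \<cdot>\<^sub>m 1\<^sub>m n) *\<^sub>v v) ^^ n) (col P i) = 0\<^sub>v n" if i: "i < n" for i
  proof -
    have "col P i = P *\<^sub>v unit_vec n i"
      using P i by (metis col_mult2 col_one one_carrier_mat right_mult_one_mat)
    then have "((\<lambda>v. (A - \<mu> i \<cdot>\<^sub>m 1\<^sub>m n) *\<^sub>v v) ^^ n) (col P i)
        = P *\<^sub>v (((\<lambda>v. (?J - \<mu> i \<cdot>\<^sub>m 1\<^sub>m n) *\<^sub>v v) ^^ n) (unit_vec n i))"
      using similar_funpow_shifted_mult_mat_vec[OF P Q J QP AJ unit_vec_carrier] by simp
    also have "\<dots> = 0\<^sub>v n"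
      using upper_triangular_unit_vec_generalised_eigenvector[OF J ut diag_eq i] P
      unfolding \<mu>_def by auto
    finally show ?thesis .
  qed
  moreover have "poly (char_poly A) z = (\<Prod>i<n. z - \<mu> i)" for z
    unfolding char_poly_similar[OF sim] \<mu>_def by (rule poly_char_poly_upper_triangular[OF J ut])
  ultimately show thesis using that P Q QP by blast
qed

section \<open>Continuity of the characteristic polynomial\<close>

lemma poly_char_poly_eq_permutation_sum:
  fixes M :: "'a :: field mat"
  assumes M: "M \<in> carrier_mat n n"
  shows "poly (char_poly M) z = (\<Sum>p | p permutes {0..<n}. signof p *
      (\<Prod>i=0..<n. (if i = p i then z else 0) - M $$ (i, p i)))"
proof -
  have "- char_matrix M z = mat n n (\<lambda>(i,j). (if i = j then z else 0) - M $$ (i,j))"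
    by (rule eq_matI) (use M in \<open>auto simp: char_matrix_def\<close>)
  moreover have "p i < n" if "p permutes {0..<n}" "i < n" for p i
    using that by (metis atLeastLessThan_iff permutes_in_image zero_le)
  ultimately show ?thesis
    unfolding char_poly_matrix[OF M] det_def by (auto intro!: sum.cong prod.cong)
qed

lemma tendsto_poly_char_poly:
  fixes A :: "'a \<Rightarrow> 'b :: {real_normed_field} mat"
  assumes A: "\<And>x. A x \<in> carrier_mat n n" and B: "B \<in> carrier_mat n n"
    and entries: "\<And>i j. i < n \<Longrightarrow> j < n \<Longrightarrow> ((\<lambda>x. A x $$ (i,j)) \<longlongrightarrow> B $$ (i,j)) F"
  shows "((\<lambda>x. poly (char_poly (A x)) z) \<longlongrightarrow> poly (char_poly B) z) F"
  unfolding poly_char_poly_eq_permutation_sum[OF A] poly_char_poly_eq_permutation_sum[OF B]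
proof (intro tendsto_sum tendsto_mult_left tendsto_prod tendsto_diff tendsto_const)
  fix p i assume "p \<in> {p. p permutes {0..<n}}" "i \<in> {0..<n}"
  then show "((\<lambda>x. A x $$ (i, p i)) \<longlongrightarrow> B $$ (i, p i)) F"
    by (intro entries) (auto simp: permutes_in_image)
qed

section \<open>Gershgorin discs\<close>

lemma gershgorin_disc:
  fixes A :: "'a :: real_normed_field mat"
  assumes A: "A \<in> carrier_mat n n" and ev: "eigenvalue A \<mu>"
  shows "\<exists>i<n. norm (\<mu> - A $$ (i,i)) \<le> (\<Sum>j\<in>{0..<n}-{i}. norm (A $$ (i,j)))"
proof -
  obtain v where v: "v \<in> carrier_vec n" "v \<noteq> 0\<^sub>v n" and Av: "A *\<^sub>v v = \<mu> \<cdot>\<^sub>v v"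
    using ev A unfolding eigenvalue_def eigenvector_def by auto
  obtain j where j: "j < n" "v $ j \<noteq> 0" using nonzero_vec_index[OF v] .
  let ?S = "(\<lambda>b. norm (v $ b)) ` {0..<n}"
  have "Max ?S \<in> ?S" using j by (intro Max_in) auto
  then obtain i where i: "i \<in> {0..<n}" and i_max: "Max ?S = norm (v $ i)" by blast
  have max: "norm (v $ b) \<le> norm (v $ i)" if "b \<in> {0..<n}" for b
    unfolding i_max[symmetric] using that by simp
  have "0 < norm (v $ j)" "norm (v $ j) \<le> norm (v $ i)" using j max by auto
  then have vi: "0 < norm (v $ i)" by linarith
  have "\<mu> * v $ i = (A *\<^sub>v v) $ i" using Av i v by simp
  also have "\<dots> = (\<Sum>b\<in>{0..<n}. A $$ (i,b) * v $ b)"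
    using A v i by (simp add: scalar_prod_def)
  also have "\<dots> = A $$ (i,i) * v $ i + (\<Sum>b\<in>{0..<n}-{i}. A $$ (i,b) * v $ b)"
    using i by (simp add: sum.remove)
  finally have "(\<mu> - A $$ (i,i)) * v $ i = (\<Sum>b\<in>{0..<n}-{i}. A $$ (i,b) * v $ b)"
    by (simp add: algebra_simps)
  then have "norm (\<mu> - A $$ (i,i)) * norm (v $ i) = norm (\<Sum>b\<in>{0..<n}-{i}. A $$ (i,b) * v $ b)"
    by (metis norm_mult)
  also have "\<dots> \<le> (\<Sum>b\<in>{0..<n}-{i}. norm (A $$ (i,b)) * norm (v $ i))"
    by (rule order_trans[OF norm_sum sum_mono]) (use max in \<open>auto simp: norm_mult intro: mult_left_mono\<close>)
  also have "\<dots> = (\<Sum>b\<in>{0..<n}-{i}. norm (A $$ (i,b))) * norm (v $ i)"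
    by (simp add: sum_distrib_right)
  finally show ?thesis using vi i by auto
qed

section \<open>Counting roots of a perturbed polynomial\<close>

lemma norm_prod_shifted_roots_lower_bound:
  fixes d :: "nat \<Rightarrow> complex" and c :: complex
  assumes sep: "\<forall>l\<in>{1..N}. d l \<noteq> c \<longrightarrow> 2 * \<delta> \<le> cmod (d l - c)"
    and \<delta>: "\<delta> \<le> 1" and t: "0 < t" "t \<le> \<delta>"
  shows "t ^ card {l\<in>{1..N}. d l = c} * \<delta> ^ N \<le> cmod (\<Prod>l=1..N. c + of_real t - d l)"
proof -
  let ?E = "{1..N} \<inter> {l. d l = c}" and ?F = "{1..N} \<inter> - {l. d l = c}"
  have factor: "(if d l = c then t else \<delta>) \<le> cmod (c + of_real t - d l)" if l: "l \<in> {1..N}" for l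
  proof (cases "d l = c")
    case False
    have "d l - c = of_real t - (c + of_real t - d l)" by simp
    then have "cmod (d l - c) \<le> t + cmod (c + of_real t - d l)"
      using norm_triangle_ineq4[of "of_real t" "c + of_real t - d l"] t by simp
    then show ?thesis using sep l False t by auto
  qed (use t in simp)
  have "card ?F \<le> N" using card_mono[of "{1..N}" ?F] by simp
  then have "t ^ card ?E * \<delta> ^ N \<le> t ^ card ?E * \<delta> ^ card ?F"
    using \<delta> t by (intro mult_left_mono power_decreasing) auto
  also have "\<dots> = (\<Prod>l=1..N. if d l = c then t else \<delta>)"
    by (simp add: prod.If_cases)
  also have "\<dots> \<le> (\<Prod>l=1..N. cmod (c + of_real t - d l))"
    using factor t \<delta> by (intro prod_mono) (auto simp: order.trans[OF _ factor])
  also have "\<dots> = cmod (\<Prod>l=1..N. c + of_real t - d l)" by (simp add: prod_norm)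
  also have "?E = {l\<in>{1..N}. d l = c}" by blast
  finally show ?thesis .
qed

lemma norm_prod_shifted_roots_upper_bound:
  fixes \<mu> :: "nat \<Rightarrow> complex" and c :: complex
  assumes c: "cmod c \<le> 1" and \<mu>: "\<forall>i<n. cmod (\<mu> i) \<le> 3/2"
    and r: "0 \<le> r" "r \<le> t" "t \<le> 1/2" and m: "m \<le> card {i. i < n \<and> cmod (\<mu> i - c) \<le> r}"
  shows "cmod (\<Prod>i<n. c + of_real t - \<mu> i) \<le> (2 * t) ^ m * 3 ^ n"
proof -
  let ?E = "{..<n} \<inter> {i. cmod (\<mu> i - c) \<le> r}" and ?F = "{..<n} \<inter> - {i. cmod (\<mu> i - c) \<le> r}"
  have factor: "cmod (c + of_real t - \<mu> i) \<le> (if cmod (\<mu> i - c) \<le> r then 2 * t else 3)" if i: "i < n" for i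
  proof -
    have "cmod (c + of_real t - \<mu> i) = cmod (of_real t - (\<mu> i - c))"
      by (rule arg_cong[where f = cmod]) simp
    also have "\<dots> \<le> t + cmod (\<mu> i - c)"
      using norm_triangle_ineq4[of "of_real t" "\<mu> i - c"] r by simp
    finally have "cmod (c + of_real t - \<mu> i) \<le> t + cmod (\<mu> i - c)" .
    moreover have "cmod (\<mu> i - c) \<le> cmod (\<mu> i) + cmod c" by (rule norm_triangle_ineq4)
    ultimately show ?thesis using \<mu> i c r by auto
  qed
  have "cmod (\<Prod>i<n. c + of_real t - \<mu> i) = (\<Prod>i<n. cmod (c + of_real t - \<mu> i))"
    by (simp add: prod_norm)
  also have "\<dots> \<le> (\<Prod>i<n. if cmod (\<mu> i - c) \<le> r then 2 * t else 3)"
    using factor by (intro prod_mono) auto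
  also have "\<dots> = (2 * t) ^ card ?E * 3 ^ card ?F"
    by (simp add: prod.If_cases)
  also have "\<dots> \<le> (2 * t) ^ m * 3 ^ n"
  proof (rule mult_mono)
    have "m \<le> card ?E" using m by (simp add: Collect_conj_eq Int_commute lessThan_def)
    then show "(2 * t) ^ card ?E \<le> (2 * t) ^ m" using r by (intro power_decreasing) auto
    have "card ?F \<le> n" using card_mono[of "{..<n}" ?F] by simp
    then show "(3::real) ^ card ?F \<le> 3 ^ n" by (intro power_increasing) auto
  qed (use r in auto)
  finally show ?thesis .
qed

lemma shift_parameter_bounds:
  fixes \<delta> :: real
  assumes "1 \<le> N" "0 < \<delta>" "\<delta> \<le> 1"
  shows "0 < \<delta> ^ N / (2 ^ (N + 2) * 3 ^ N)" "\<delta> ^ N / (2 ^ (N + 2) * 3 ^ N) \<le> \<delta> / 4"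
proof -
  have "(4::real) = 2 ^ 2 * 1" by simp
  also have "\<dots> \<le> 2 ^ (N + 2) * 3 ^ N" by (intro mult_mono power_increasing) auto
  finally have "\<delta> ^ N / (2 ^ (N + 2) * 3 ^ N) \<le> \<delta> ^ N / 4" using assms by (intro divide_left_mono) auto
  moreover have "\<delta> ^ N \<le> \<delta>" using assms power_decreasing[of 1 N \<delta>] by simp
  ultimately show "\<delta> ^ N / (2 ^ (N + 2) * 3 ^ N) \<le> \<delta> / 4" by simp
  show "0 < \<delta> ^ N / (2 ^ (N + 2) * 3 ^ N)" using assms by simp
qed

text \<open>Comparison at the test point c + t: the unperturbed product is at least t^m \<delta>^N, whereas
  m + 1 roots \<mu>_i near c force the perturbed one below (2t)^(m+1) 3^N; the choice of t makes the
  latter at most half the former.\<close>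
lemma card_near_roots_le_multiplicity:
  fixes d \<mu> :: "nat \<Rightarrow> complex" and c :: complex
  assumes N: "1 \<le> N" and sep: "\<forall>l\<in>{1..N}. d l \<noteq> c \<longrightarrow> 2 * \<delta> \<le> cmod (d l - c)"
    and \<delta>: "0 < \<delta>" "\<delta> \<le> 1" and t: "t = \<delta> ^ N / (2 ^ (N + 2) * 3 ^ N)"
    and r: "0 \<le> r" "r \<le> t" and bounded: "cmod c \<le> 1" "\<forall>i<N. cmod (\<mu> i) \<le> 3/2"
    and close: "cmod ((\<Prod>i<N. c + of_real t - \<mu> i) - (\<Prod>l=1..N. c + of_real t - d l))
                  < cmod (\<Prod>l=1..N. c + of_real t - d l) / 2"
  shows "card {i. i < N \<and> cmod (\<mu> i - c) \<le> r} \<le> card {l\<in>{1..N}. d l = c}"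
proof (rule ccontr)
  let ?m = "card {l\<in>{1..N}. d l = c}"
  let ?p = "\<Prod>l=1..N. c + of_real t - d l" and ?q = "\<Prod>i<N. c + of_real t - \<mu> i"
  assume "\<not> ?thesis"
  then have more: "Suc ?m \<le> card {i. i < N \<and> cmod (\<mu> i - c) \<le> r}" by simp
  have "?m \<le> card {1..N}" by (rule card_mono) auto
  then have m_le: "?m \<le> N" by simp
  have t_pos: "0 < t" and t_small: "t \<le> \<delta> / 4"
    unfolding t using shift_parameter_bounds[OF N \<delta>] by auto
  have lower: "t ^ ?m * \<delta> ^ N \<le> cmod ?p"
    by (rule norm_prod_shifted_roots_lower_bound[OF sep \<delta>(2) t_pos]) (use t_small \<delta> in simp)
  have "cmod ?q \<le> (2 * t) ^ Suc ?m * 3 ^ N"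
    by (rule norm_prod_shifted_roots_upper_bound[OF bounded r _ more]) (use t_small \<delta> in simp)
  also have "\<dots> = t ^ ?m * (2 ^ Suc ?m * 3 ^ N * t)" by (simp add: power_mult_distrib)
  also have "\<dots> \<le> t ^ ?m * (2 ^ (N + 1) * 3 ^ N * t)"
    using t_pos m_le by (intro mult_left_mono mult_right_mono power_increasing) auto
  also have "2 ^ (N + 1) * 3 ^ N * t = \<delta> ^ N / 2" unfolding t by (simp add: field_simps power_add)
  finally have "cmod ?q \<le> cmod ?p / 2" using lower by simp
  moreover have "cmod ?p \<le> cmod ?q + cmod (?q - ?p)"
    using norm_triangle_ineq2[of ?p ?q] norm_minus_commute[of ?p ?q] by linarith
  ultimately show False using close by simp
qed

lemma obtain_bij_betw_matching_fibres:
  fixes f :: "'a \<Rightarrow> 'c" and h :: "'b \<Rightarrow> 'c"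
  assumes A: "finite A" and B: "finite B" and card: "card A = card B" and img: "h ` B \<subseteq> f ` A"
    and fibres: "\<And>c. c \<in> f ` A \<Longrightarrow> card {b\<in>B. h b = c} \<le> card {a\<in>A. f a = c}"
  obtains g where "bij_betw g A B" "\<And>a. a \<in> A \<Longrightarrow> h (g a) = f a"
proof -
  define FA where "FA c = {a\<in>A. f a = c}" for c
  define FB where "FB c = {b\<in>B. h b = c}" for c
  have A_UN: "A = (\<Union>c\<in>f ` A. FA c)" and B_UN: "B = (\<Union>c\<in>f ` A. FB c)"
    using img by (auto simp: FA_def FB_def)
  have "card (\<Union>c\<in>f ` A. FB c) = (\<Sum>c\<in>f ` A. card (FB c))"
    by (rule card_UN_disjoint) (use A B in \<open>auto simp: FB_def\<close>)
  moreover have "card (\<Union>c\<in>f ` A. FA c) = (\<Sum>c\<in>f ` A. card (FA c))"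
    by (rule card_UN_disjoint) (use A in \<open>auto simp: FA_def\<close>)
  ultimately have sums: "(\<Sum>c\<in>f ` A. card (FB c)) = (\<Sum>c\<in>f ` A. card (FA c))"
    using card A_UN B_UN by simp
  have same_card: "card (FB c) = card (FA c)" if "c \<in> f ` A" for c
    by (rule sum_mono_inv[OF sums _ that]) (use A fibres in \<open>auto simp: FA_def FB_def\<close>)
  have "\<forall>c\<in>f ` A. \<exists>G. bij_betw G (FA c) (FB c)"
    using same_card A B by (auto intro!: finite_same_card_bij simp: FA_def FB_def)
  from bchoice[OF this] obtain G where G: "\<And>c. c \<in> f ` A \<Longrightarrow> bij_betw (G c) (FA c) (FB c)"
    by blast
  define g where "g a = G (f a) a" for a
  have "bij_betw g (FA c) (FB c)" if "c \<in> f ` A" for c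
    using G[OF that] by (rule bij_betw_cong[THEN iffD1, rotated]) (auto simp: g_def FA_def)
  then have "bij_betw g (\<Union>c\<in>f ` A. FA c) (\<Union>c\<in>f ` A. FB c)"
    by (intro bij_betw_UNION_disjoint) (auto simp: disjoint_family_on_def FB_def)
  then have "bij_betw g A B" using A_UN B_UN by simp
  moreover have "h (g a) = f a" if "a \<in> A" for a
    using G[of "f a"] that unfolding g_def by (auto simp: FA_def FB_def dest: bij_betw_apply)
  ultimately show thesis using that by blast
qed

lemma obtain_bij_betw_near_labelling:
  fixes \<mu> d :: "nat \<Rightarrow> 'a :: real_normed_vector"
  assumes near: "\<And>i. i < N \<Longrightarrow> \<exists>l\<in>{1..N}. norm (\<mu> i - d l) \<le> r"
    and counts: "\<And>c. c \<in> d ` {1..N} \<Longrightarrow> card {i. i < N \<and> norm (\<mu> i - c) \<le> r} \<le> card {l\<in>{1..N}. d l = c}"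
  obtains g where "bij_betw g {1..N} {0..<N}" "\<And>l. l \<in> {1..N} \<Longrightarrow> norm (\<mu> (g l) - d l) \<le> r"
proof -
  have "\<forall>i\<in>{..<N}. \<exists>l. l \<in> {1..N} \<and> norm (\<mu> i - d l) \<le> r" using near by blast
  from bchoice[OF this] obtain centre
    where centre: "\<And>i. i < N \<Longrightarrow> centre i \<in> {1..N} \<and> norm (\<mu> i - d (centre i)) \<le> r"
    by blast
  obtain g where g: "bij_betw g {1..N} {0..<N}" and g_centre: "\<And>l. l \<in> {1..N} \<Longrightarrow> d (centre (g l)) = d l"
  proof (rule obtain_bij_betw_matching_fibres[of "{1..N}" "{0..<N}" "d \<circ> centre" d])
    show "(d \<circ> centre) ` {0..<N} \<subseteq> d ` {1..N}" using centre by auto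
    fix c assume c: "c \<in> d ` {1..N}"
    have "card {i\<in>{0..<N}. (d \<circ> centre) i = c} \<le> card {i. i < N \<and> norm (\<mu> i - c) \<le> r}"
      using centre by (intro card_mono) auto
    also have "\<dots> \<le> card {l\<in>{1..N}. d l = c}" by (rule counts[OF c])
    finally show "card {i\<in>{0..<N}. (d \<circ> centre) i = c} \<le> card {l\<in>{1..N}. d l = c}" .
  qed auto
  show thesis
  proof (rule that[OF g])
    fix l assume l: "l \<in> {1..N}"
    then show "norm (\<mu> (g l) - d l) \<le> r"
      using centre[of "g l"] g_centre[OF l] g by (auto dest: bij_betw_apply)
  qed
qed

section \<open>The transfer operator on a Fourier mode\<close>

definition fourier_mode :: "int \<Rightarrow> real \<Rightarrow> complex" where
  "fourier_mode k x = exp (2 * of_real pi * \<i> * of_int k * of_real x)"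

definition rotation_phase :: "int \<Rightarrow> (nat \<Rightarrow> real) \<Rightarrow> nat \<Rightarrow> complex" where
  "rotation_phase k \<alpha> j = exp (- 2 * of_real pi * \<i> * of_int k * of_real (\<alpha> j))"

lemma sep_fun_eq: "sep_fun k f j x = f j * fourier_mode k x"
  unfolding sep_fun_def fourier_mode_def ..

lemma fourier_mode_nonzero: "fourier_mode k x \<noteq> 0"
  unfolding fourier_mode_def by simp

lemma norm_fourier_mode: "cmod (fourier_mode k x) = 1"
proof -
  have "2 * of_real pi * \<i> * of_int k * of_real x = \<i> * complex_of_real (2 * pi * k * x)" by simp
  then show ?thesis unfolding fourier_mode_def by (simp only: norm_exp_i_times)
qed

lemma norm_rotation_phase: "cmod (rotation_phase k \<alpha> j) = 1"
proof -
  have "- 2 * of_real pi * \<i> * of_int k * of_real (\<alpha> j) = \<i> * complex_of_real (- 2 * pi * k * \<alpha> j)"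
    by simp
  then show ?thesis unfolding rotation_phase_def by (simp only: norm_exp_i_times)
qed

lemma fourier_mode_frac_rotate:
  "fourier_mode k (frac (x - \<alpha> j)) = fourier_mode k x * rotation_phase k \<alpha> j"
proof -
  have "2 * of_real pi * \<i> * of_int k * of_real (frac (x - \<alpha> j))
      = 2 * of_real pi * \<i> * of_int k * of_real x + (- 2 * of_real pi * \<i> * of_int k * of_real (\<alpha> j))
        - \<i> * (of_int (k * \<lfloor>x - \<alpha> j\<rfloor>) * (of_real pi * 2))"
    unfolding frac_def by (simp add: algebra_simps)
  then show ?thesis
    unfolding fourier_mode_def rotation_phase_def by (simp only: exp_diff exp_add exp_2pi_1_int) simp
qed

text \<open>The transfer operator restricted to the k-th Fourier mode, as an N x N matrix acting on
  coefficient vectors; the vector index a stands for the point a + 1 of {1..N}.\<close>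
definition mode_matrix :: "nat \<Rightarrow> (nat \<Rightarrow> nat \<Rightarrow> real) \<Rightarrow> (nat \<Rightarrow> real) \<Rightarrow> int \<Rightarrow> complex mat" where
  "mode_matrix N W \<alpha> k = mat N N (\<lambda>(a,b). rotation_phase k \<alpha> (Suc a) * of_real (W (Suc a) (Suc b)))"

definition vec_fun :: "complex vec \<Rightarrow> nat \<Rightarrow> complex" where
  "vec_fun v j = v $ (j - 1)"

lemma mode_matrix_carrier[simp]: "mode_matrix N W \<alpha> k \<in> carrier_mat N N"
  unfolding mode_matrix_def by simp

lemma vec_fun_shifted_mode_matrix_mult:
  assumes v: "v \<in> carrier_vec N" and j: "j \<in> {1..N}"
  shows "vec_fun ((mode_matrix N W \<alpha> k - c \<cdot>\<^sub>m 1\<^sub>m N) *\<^sub>v v) j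
       = rotation_phase k \<alpha> j * (\<Sum>j'=1..N. of_real (W j j') * vec_fun v j') - c * vec_fun v j"
proof -
  obtain a where ja: "j = Suc a" and a: "a < N" using j by (cases j) auto
  have "vec_fun ((mode_matrix N W \<alpha> k - c \<cdot>\<^sub>m 1\<^sub>m N) *\<^sub>v v) j
      = (\<Sum>b<N. rotation_phase k \<alpha> j * (of_real (W j (Suc b)) * v $ b) - (if b = a then c * v $ a else 0))"
    unfolding vec_fun_def ja using a v
    by (auto simp: mode_matrix_def scalar_prod_def lessThan_atLeast0 algebra_simps intro!: sum.cong)
  also have "\<dots> = rotation_phase k \<alpha> j * (\<Sum>b<N. of_real (W j (Suc b)) * v $ b) - c * v $ a"
    using a by (simp add: sum_subtractf sum_distrib_left)
  finally show ?thesis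
    by (simp add: sum.atLeast1_atMost_eq vec_fun_def ja)
qed

lemma funpow_shifted_transfer_op_sep_fun:
  assumes v: "v \<in> carrier_vec N" and j: "j \<in> {1..N}"
  shows "((\<lambda>G j x. transfer_op N W \<alpha> G j x - c * G j x) ^^ n) (sep_fun k (vec_fun v)) j x
       = sep_fun k (vec_fun (((\<lambda>v. (mode_matrix N W \<alpha> k - c \<cdot>\<^sub>m 1\<^sub>m N) *\<^sub>v v) ^^ n) v)) j x"
  using j
proof (induction n arbitrary: j x)
  case 0
  then show ?case by simp
next
  case (Suc n)
  let ?u = "((\<lambda>v. (mode_matrix N W \<alpha> k - c \<cdot>\<^sub>m 1\<^sub>m N) *\<^sub>v v) ^^ n) v"
  have u: "?u \<in> carrier_vec N" by (rule funpow_mult_mat_vec_carrier) (use v in auto)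
  let ?G = "((\<lambda>G j x. transfer_op N W \<alpha> G j x - c * G j x) ^^ n) (sep_fun k (vec_fun v))"
  let ?S = "\<Sum>j'=1..N. of_real (W j j') * vec_fun ?u j'"
  have IH: "?G j' y = vec_fun ?u j' * fourier_mode k y" if "j' \<in> {1..N}" for j' y
    using Suc.IH[OF that] by (simp only: sep_fun_eq[of k _ j' y])
  have "transfer_op N W \<alpha> ?G j x
      = (\<Sum>j'=1..N. of_real (W j j') * (vec_fun ?u j' * fourier_mode k (frac (x - \<alpha> j))))"
    unfolding transfer_op_def[of N W \<alpha> ?G] by (intro sum.cong) (simp_all add: IH)
  also have "\<dots> = fourier_mode k x * (rotation_phase k \<alpha> j * ?S)"
    unfolding fourier_mode_frac_rotate by (simp add: sum_distrib_left sum_distrib_right mult_ac)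
  finally have "transfer_op N W \<alpha> ?G j x - c * ?G j x
      = fourier_mode k x * (rotation_phase k \<alpha> j * ?S) - c * (vec_fun ?u j * fourier_mode k x)"
    by (simp only: IH[OF Suc.prems])
  also have "\<dots> = (rotation_phase k \<alpha> j * ?S - c * vec_fun ?u j) * fourier_mode k x"
    by (simp add: algebra_simps)
  also have "\<dots> = vec_fun ((mode_matrix N W \<alpha> k - c \<cdot>\<^sub>m 1\<^sub>m N) *\<^sub>v ?u) j * fourier_mode k x"
    by (simp only: vec_fun_shifted_mode_matrix_mult[OF u Suc.prems])
  finally show ?case by (simp only: funpow.simps(2) o_apply sep_fun_eq[of k _ j x])
qed

lemma L2_mem_sep_fun: "L2_mem N (sep_fun k f)"
  unfolding L2_mem_def
proof (intro ballI conjI)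
  fix j
  have "continuous_on {0..<1} (sep_fun k f j)"
    unfolding sep_fun_def by (intro continuous_intros)
  then show "sep_fun k f j \<in> borel_measurable (lebesgue_on {0..<1})"
    by (intro continuous_imp_measurable_on_sets_lebesgue) auto
  have "finite_measure (lebesgue_on {0..<1::real})"
    by (rule finite_measure_lebesgue_on) (auto intro!: fmeasurableI)
  moreover have "(\<lambda>x. (cmod (sep_fun k f j x))\<^sup>2) = (\<lambda>x. (cmod (f j))\<^sup>2)"
    by (simp add: sep_fun_def fourier_mode_def[symmetric] norm_mult norm_fourier_mode)
  ultimately show "integrable (lebesgue_on {0..<1}) (\<lambda>x. (cmod (sep_fun k f j x))\<^sup>2)"
    by (simp add: finite_measure.integrable_const)
qed

lemma not_AE_False_lebesgue_on_unit_interval: "\<not> (AE x in lebesgue_on {0..<1::real}. False)"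
proof
  assume "AE x in lebesgue_on {0..<1::real}. False"
  then obtain Z where "{x \<in> space (lebesgue_on {0..<1::real}). \<not> False} \<subseteq> Z"
    and Z: "emeasure (lebesgue_on {0..<1}) Z = 0" "Z \<in> sets (lebesgue_on {0..<1::real})"
    by (rule AE_E)
  then have "{0..<1} \<subseteq> Z" by auto
  have "emeasure (lebesgue_on {0..<1::real}) {0..<1} = emeasure lebesgue {0..<1::real}"
    by (rule emeasure_restrict_space) auto
  also have "\<dots> = 1" by simp
  finally have "1 \<le> emeasure (lebesgue_on {0..<1::real}) Z"
    using emeasure_mono[OF \<open>{0..<1} \<subseteq> Z\<close> Z(2)] by simp
  then show False using Z(1) by simp
qed

lemma L2_zero_sep_fun_iff: "L2_zero N (sep_fun k f) \<longleftrightarrow> (\<forall>j\<in>{1..N}. f j = 0)"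
proof
  assume zero: "L2_zero N (sep_fun k f)"
  show "\<forall>j\<in>{1..N}. f j = 0"
  proof (rule ballI, rule ccontr)
    fix j assume "j \<in> {1..N}" "f j \<noteq> 0"
    then have "AE x in lebesgue_on {0..<1::real}. sep_fun k f j x = 0"
      using zero unfolding L2_zero_def by blast
    then have "AE x in lebesgue_on {0..<1::real}. False"
      by (rule eventually_mono) (use \<open>f j \<noteq> 0\<close> in \<open>simp add: sep_fun_eq fourier_mode_nonzero\<close>)
    then show False using not_AE_False_lebesgue_on_unit_interval by blast
  qed
qed (simp add: L2_zero_def sep_fun_def)

lemma gen_eigenfunction_sep_fun:
  assumes v: "v \<in> carrier_vec N" "v \<noteq> 0\<^sub>v N" and n: "1 \<le> n"
    and nil: "((\<lambda>v. (mode_matrix N W \<alpha> k - c \<cdot>\<^sub>m 1\<^sub>m N) *\<^sub>v v) ^^ n) v = 0\<^sub>v N"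
  shows "gen_eigenfunction N W \<alpha> c (sep_fun k (vec_fun v))"
  unfolding gen_eigenfunction_def
proof (intro conjI exI)
  show "L2_mem N (sep_fun k (vec_fun v))" by (rule L2_mem_sep_fun)
  obtain a where a: "a < N" "v $ a \<noteq> 0" using nonzero_vec_index[OF v] .
  then show "\<not> L2_zero N (sep_fun k (vec_fun v))"
    unfolding L2_zero_sep_fun_iff by (auto simp: vec_fun_def intro!: bexI[of _ "Suc a"])
  have "((\<lambda>G j x. transfer_op N W \<alpha> G j x - c * G j x) ^^ n) (sep_fun k (vec_fun v)) j x = 0"
    if "j \<in> {1..N}" for j x
    using funpow_shifted_transfer_op_sep_fun[OF v(1) that, where W = W and \<alpha> = \<alpha> and c = c and n = n and k = k and x = x] nil that
    by (auto simp: sep_fun_eq[of k _ j x] vec_fun_def)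
  then show "L2_zero N (((\<lambda>G j x. transfer_op N W \<alpha> G j x - c * G j x) ^^ n) (sep_fun k (vec_fun v)))"
    unfolding L2_zero_def by simp
qed (rule n)

lemma L2_lin_indep_sep_fun_cols:
  assumes P: "P \<in> carrier_mat N N" and Q: "Q \<in> carrier_mat N N" and QP: "Q * P = 1\<^sub>m N"
    and g: "bij_betw g {1..N} {0..<N}"
  shows "L2_lin_indep N (\<lambda>l. sep_fun k (vec_fun (col P (g l))))"
  unfolding L2_lin_indep_def
proof (intro allI impI)
  fix c :: "nat \<Rightarrow> complex"
  have "(\<lambda>j x. \<Sum>l=1..N. c l * sep_fun k (vec_fun (col P (g l))) j x)
      = sep_fun k (\<lambda>j. \<Sum>l=1..N. c l * vec_fun (col P (g l)) j)"
    by (intro ext) (simp add: sep_fun_eq sum_distrib_right mult.assoc)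
  moreover assume "L2_zero N (\<lambda>j x. \<Sum>l=1..N. c l * sep_fun k (vec_fun (col P (g l))) j x)"
  ultimately have comb: "\<forall>j\<in>{1..N}. (\<Sum>l=1..N. c l * vec_fun (col P (g l)) j) = 0"
    by (simp add: L2_zero_sep_fun_iff)
  have gl: "g l < N" if "l \<in> {1..N}" for l using g that by (auto dest: bij_betw_apply)
  define w where "w = vec N (\<lambda>i. c (inv_into {1..N} g i))"
  have w: "w \<in> carrier_vec N" unfolding w_def by simp
  have w_g: "w $ g l = c l" if "l \<in> {1..N}" for l
    using that gl[OF that] g by (simp add: w_def bij_betw_inv_into_left)
  have "P *\<^sub>v w = 0\<^sub>v N"
  proof (rule eq_vecI)
    fix a assume "a < dim_vec (0\<^sub>v N)"
    then have a: "a < N" by simp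
    have "(P *\<^sub>v w) $ a = (\<Sum>i\<in>{0..<N}. P $$ (a,i) * w $ i)"
      using a P w by (simp add: scalar_prod_def)
    also have "\<dots> = (\<Sum>l=1..N. P $$ (a, g l) * w $ g l)"
      using sum.reindex_bij_betw[OF g, of "\<lambda>i. P $$ (a,i) * w $ i"] by simp
    also have "\<dots> = (\<Sum>l=1..N. c l * vec_fun (col P (g l)) (Suc a))"
      using a P gl w_g by (intro sum.cong) (auto simp: vec_fun_def)
    also have "\<dots> = 0" using comb a by simp
    finally show "(P *\<^sub>v w) $ a = 0\<^sub>v N $ a" using a by simp
  qed (use P in simp)
  then have "w = 0\<^sub>v N"
    using assoc_mult_mat_vec[OF Q P w] QP w Q by auto
  then show "\<forall>l\<in>{1..N}. c l = 0" using w_g gl by force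
qed

lemma sep_eigen_system_of_generalised_eigenbasis:
  assumes N: "1 \<le> N" and P: "P \<in> carrier_mat N N" and Q: "Q \<in> carrier_mat N N"
    and QP: "Q * P = 1\<^sub>m N"
    and gen: "\<And>i. i < N \<Longrightarrow> ((\<lambda>v. (mode_matrix N W \<alpha> k - \<mu> i \<cdot>\<^sub>m 1\<^sub>m N) *\<^sub>v v) ^^ N) (col P i) = 0\<^sub>v N"
    and g: "bij_betw g {1..N} {0..<N}"
  shows "sep_eigen_system N W \<alpha> k (\<lambda>l. \<mu> (g l)) (\<lambda>l. vec_fun (col P (g l)))"
  unfolding sep_eigen_system_def
proof (intro conjI ballI)
  show "L2_lin_indep N (\<lambda>l. sep_fun k (vec_fun (col P (g l))))"
    by (rule L2_lin_indep_sep_fun_cols[OF P Q QP g])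
  fix l assume "l \<in> {1..N}"
  then have gl: "g l < N" using g by (auto dest: bij_betw_apply)
  have "col P (g l) \<noteq> 0\<^sub>v N"
  proof
    assume "col P (g l) = 0\<^sub>v N"
    then have "unit_vec N (g l) = (0\<^sub>v N :: complex vec)"
      using col_mult2[OF Q P gl] QP Q gl by auto
    then show False using gl by (metis index_unit_vec(1) index_zero_vec(1) one_neq_zero)
  qed
  then show "gen_eigenfunction N W \<alpha> (\<mu> (g l)) (sep_fun k (vec_fun (col P (g l))))"
    using P gl gen N by (intro gen_eigenfunction_sep_fun[where n = N]) auto
qed

lemma sep_eigen_system_with_labelling:
  assumes N: "1 \<le> N"
    and label: "\<And>\<mu>. (\<And>z. poly (char_poly (mode_matrix N W \<alpha> k)) z = (\<Prod>i<N. z - \<mu> i))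
      \<Longrightarrow> \<exists>g. bij_betw g {1..N} {0..<N} \<and> (\<forall>l\<in>{1..N}. R l (\<mu> (g l)))"
  shows "\<exists>lam f. sep_eigen_system N W \<alpha> k lam f \<and> (\<forall>l\<in>{1..N}. R l (lam l))"
proof (rule complex_generalised_eigenbasis[OF mode_matrix_carrier[of N W \<alpha> k]])
  fix P Q \<mu>
  assume basis: "P \<in> carrier_mat N N" "Q \<in> carrier_mat N N" "Q * P = 1\<^sub>m N"
      "\<And>i. i < N \<Longrightarrow> ((\<lambda>v. (mode_matrix N W \<alpha> k - \<mu> i \<cdot>\<^sub>m 1\<^sub>m N) *\<^sub>v v) ^^ N) (col P i) = 0\<^sub>v N"
    and cp: "\<And>z. poly (char_poly (mode_matrix N W \<alpha> k)) z = (\<Prod>i<N. z - \<mu> i)"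
  obtain g where g: "bij_betw g {1..N} {0..<N}" and R: "\<forall>l\<in>{1..N}. R l (\<mu> (g l))"
    using label[OF cp] by blast
  show ?thesis using sep_eigen_system_of_generalised_eigenbasis[OF N basis g] R by blast
qed

section \<open>Eigenvalues of the perturbed mode matrix\<close>

lemma off_diagonal_row_sum_eq_abs_diag:
  fixes Wd :: "nat \<Rightarrow> nat \<Rightarrow> real"
  assumes i: "i \<in> {1..N}" and off: "\<forall>j\<in>{1..N}. i \<noteq> j \<longrightarrow> Wd i j \<ge> 0"
    and row: "(\<Sum>j=1..N. Wd i j) = 0"
  shows "(\<Sum>j\<in>{1..N}-{i}. Wd i j) = \<bar>Wd i i\<bar>"
proof -
  have "(\<Sum>j=1..N. Wd i j) = Wd i i + (\<Sum>j\<in>{1..N}-{i}. Wd i j)"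
    using i by (simp add: sum.remove)
  moreover have "(\<Sum>j\<in>{1..N}-{i}. Wd i j) \<ge> 0" using off by (intro sum_nonneg) auto
  ultimately show ?thesis using row by linarith
qed

text \<open>The Gershgorin disc of row l has centre e(-k alpha_l)(1 + eps Wd_ll) and radius eps |Wd_ll|,
  hence lies within 2 eps |Wd_ll| of the unperturbed eigenvalue e(-k alpha_l).\<close>
lemma eigenvalue_mode_matrix_near_rotation_phase:
  fixes Wd :: "nat \<Rightarrow> nat \<Rightarrow> real"
  assumes off: "\<forall>i\<in>{1..N}. \<forall>j\<in>{1..N}. i \<noteq> j \<longrightarrow> Wd i j \<ge> 0"
    and rows: "\<forall>i\<in>{1..N}. (\<Sum>j=1..N. Wd i j) = 0"
    and \<epsilon>: "0 \<le> \<epsilon>" and ev: "eigenvalue (mode_matrix N (W_eps Wd \<epsilon>) \<alpha> k) \<mu>"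
  shows "\<exists>l\<in>{1..N}. cmod (\<mu> - rotation_phase k \<alpha> l) \<le> 2 * \<epsilon> * \<bar>Wd l l\<bar>"
proof -
  let ?A = "mode_matrix N (W_eps Wd \<epsilon>) \<alpha> k"
  obtain i where i: "i < N" and disc: "cmod (\<mu> - ?A $$ (i,i)) \<le> (\<Sum>j\<in>{0..<N}-{i}. cmod (?A $$ (i,j)))"
    using gershgorin_disc[OF mode_matrix_carrier ev] by blast
  define l where "l = Suc i"
  have l: "l \<in> {1..N}" using i l_def by simp
  have "(\<Sum>j\<in>{0..<N}-{i}. cmod (?A $$ (i,j))) = (\<Sum>j\<in>{0..<N}-{i}. \<epsilon> * Wd l (Suc j))"
    using i off \<epsilon> by (intro sum.cong) (auto simp: mode_matrix_def W_eps_def l_def norm_mult norm_rotation_phase)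
  also have "\<dots> = \<epsilon> * (\<Sum>j\<in>{1..N}-{l}. Wd l j)"
  proof -
    have "(\<Sum>j\<in>{0..<N}-{i}. Wd l (Suc j)) = (\<Sum>j\<in>{1..N}-{l}. Wd l j)"
      by (rule sum.reindex_bij_witness[of _ "\<lambda>j. j - 1" Suc]) (auto simp: l_def)
    then show ?thesis by (simp add: sum_distrib_left[symmetric])
  qed
  also have "\<dots> = \<epsilon> * \<bar>Wd l l\<bar>" using off_diagonal_row_sum_eq_abs_diag[OF l] off rows l by simp
  finally have radius: "cmod (\<mu> - ?A $$ (i,i)) \<le> \<epsilon> * \<bar>Wd l l\<bar>" using disc by simp
  have "cmod (?A $$ (i,i) - rotation_phase k \<alpha> l) = \<epsilon> * \<bar>Wd l l\<bar>"
    using i \<epsilon> by (simp add: mode_matrix_def W_eps_def l_def algebra_simps norm_mult norm_rotation_phase)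
  then have "cmod (\<mu> - rotation_phase k \<alpha> l) \<le> 2 * \<epsilon> * \<bar>Wd l l\<bar>"
    using radius norm_triangle_ineq[of "\<mu> - ?A $$ (i,i)" "?A $$ (i,i) - rotation_phase k \<alpha> l"] by simp
  then show ?thesis using l by blast
qed

lemma char_poly_root_mode_matrix_near_rotation_phase:
  fixes Wd :: "nat \<Rightarrow> nat \<Rightarrow> real"
  assumes off: "\<forall>i\<in>{1..N}. \<forall>j\<in>{1..N}. i \<noteq> j \<longrightarrow> Wd i j \<ge> 0"
    and rows: "\<forall>i\<in>{1..N}. (\<Sum>j=1..N. Wd i j) = 0" and \<epsilon>: "0 \<le> \<epsilon>"
    and cp: "\<And>z. poly (char_poly (mode_matrix N (W_eps Wd \<epsilon>) \<alpha> k)) z = (\<Prod>i<N. z - \<mu> i)"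
    and i: "i < N"
  shows "\<exists>l\<in>{1..N}. cmod (\<mu> i - rotation_phase k \<alpha> l) \<le> 2 * \<epsilon> * \<bar>Wd l l\<bar>"
proof -
  have "poly (char_poly (mode_matrix N (W_eps Wd \<epsilon>) \<alpha> k)) (\<mu> i) = 0"
    unfolding cp using i by (intro prod_zero) auto
  then have "eigenvalue (mode_matrix N (W_eps Wd \<epsilon>) \<alpha> k) (\<mu> i)"
    by (simp add: eigenvalue_root_char_poly[OF mode_matrix_carrier])
  then show ?thesis by (rule eigenvalue_mode_matrix_near_rotation_phase[OF off rows \<epsilon>])
qed

lemma poly_char_poly_mode_matrix_unperturbed:
  "poly (char_poly (mode_matrix N (W_eps Wd 0) \<alpha> k)) z = (\<Prod>l=1..N. z - rotation_phase k \<alpha> l)"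
proof -
  have "upper_triangular (mode_matrix N (W_eps Wd 0) \<alpha> k)"
    unfolding upper_triangular_def by (auto simp: mode_matrix_def W_eps_def)
  then have "poly (char_poly (mode_matrix N (W_eps Wd 0) \<alpha> k)) z
      = (\<Prod>i<N. z - mode_matrix N (W_eps Wd 0) \<alpha> k $$ (i,i))"
    by (rule poly_char_poly_upper_triangular[OF mode_matrix_carrier])
  also have "\<dots> = (\<Prod>i<N. z - rotation_phase k \<alpha> (Suc i))"
    by (intro prod.cong) (auto simp: mode_matrix_def W_eps_def)
  finally show ?thesis by (simp add: prod.atLeast1_atMost_eq)
qed

lemma tendsto_poly_char_poly_mode_matrix:
  "((\<lambda>\<epsilon>. poly (char_poly (mode_matrix N (W_eps Wd \<epsilon>) \<alpha> k)) z)
     \<longlongrightarrow> (\<Prod>l=1..N. z - rotation_phase k \<alpha> l)) (at_right 0)"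
proof -
  have "((\<lambda>\<epsilon>. poly (char_poly (mode_matrix N (W_eps Wd \<epsilon>) \<alpha> k)) z)
     \<longlongrightarrow> poly (char_poly (mode_matrix N (W_eps Wd 0) \<alpha> k)) z) (at_right 0)"
  proof (rule tendsto_poly_char_poly)
    fix i j assume "i < N" "j < N"
    have "isCont (\<lambda>\<epsilon>. rotation_phase k \<alpha> (Suc i) * of_real ((if i = j then 1 else 0) + \<epsilon> * Wd (Suc i) (Suc j))) 0"
      by (intro continuous_intros)
    from tendsto_within_subset[OF isContD[OF this], of "{0<..}"]
    show "((\<lambda>\<epsilon>. mode_matrix N (W_eps Wd \<epsilon>) \<alpha> k $$ (i, j))
      \<longlongrightarrow> mode_matrix N (W_eps Wd 0) \<alpha> k $$ (i, j)) (at_right 0)"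
      using \<open>i < N\<close> \<open>j < N\<close> by (simp add: mode_matrix_def W_eps_def)
  qed simp_all
  then show ?thesis by (simp only: poly_char_poly_mode_matrix_unperturbed)
qed

lemma eventually_card_near_eigenvalues_le_multiplicity:
  assumes N: "1 \<le> N" and c: "c \<in> rotation_phase k \<alpha> ` {1..N}" and R: "0 \<le> R"
  shows "\<forall>\<^sub>F \<epsilon> in at_right 0. \<forall>\<mu>.
           (\<forall>z. poly (char_poly (mode_matrix N (W_eps Wd \<epsilon>) \<alpha> k)) z = (\<Prod>i<N. z - \<mu> i))
       \<longrightarrow> (\<forall>i<N. cmod (\<mu> i) \<le> 3/2)
       \<longrightarrow> card {i. i < N \<and> cmod (\<mu> i - c) \<le> R * \<epsilon>} \<le> card {l\<in>{1..N}. rotation_phase k \<alpha> l = c}"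
proof -
  let ?d = "rotation_phase k \<alpha>"
  obtain \<delta>0 where "0 < \<delta>0" and avoid: "\<forall>x\<in>?d ` {1..N}. x \<noteq> c \<longrightarrow> \<delta>0 \<le> dist c x"
    using finite_set_avoid[of "?d ` {1..N}" c] by auto
  define \<delta> where "\<delta> = min (\<delta>0 / 2) 1"
  define t where "t = \<delta> ^ N / (2 ^ (N + 2) * 3 ^ N)"
  let ?p = "\<Prod>l=1..N. c + of_real t - ?d l"
  have \<delta>: "0 < \<delta>" "\<delta> \<le> 1" using \<open>0 < \<delta>0\<close> by (auto simp: \<delta>_def)
  have sep: "\<forall>l\<in>{1..N}. ?d l \<noteq> c \<longrightarrow> 2 * \<delta> \<le> cmod (?d l - c)"
    using avoid by (auto simp: \<delta>_def dist_norm norm_minus_commute)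
  have t: "0 < t" "t \<le> \<delta>" using shift_parameter_bounds[OF N \<delta>] \<delta> by (auto simp: t_def)
  have c_norm: "cmod c \<le> 1" using c by (auto simp: norm_rotation_phase)
  have "0 < t ^ card {l\<in>{1..N}. ?d l = c} * \<delta> ^ N" using t \<delta> by simp
  also have "\<dots> \<le> cmod ?p" by (rule norm_prod_shifted_roots_lower_bound[OF sep \<delta>(2) t])
  finally have p_pos: "0 < cmod ?p" .
  have "((\<lambda>\<epsilon>. R * \<epsilon>) \<longlongrightarrow> R * 0) (at_right 0)" by (intro tendsto_intros)
  then have small: "\<forall>\<^sub>F \<epsilon> in at_right 0. R * \<epsilon> < t" using t by (intro order_tendstoD(2)) auto
  have "((\<lambda>\<epsilon>. poly (char_poly (mode_matrix N (W_eps Wd \<epsilon>) \<alpha> k)) (c + of_real t)) \<longlongrightarrow> ?p) (at_right 0)"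
    by (rule tendsto_poly_char_poly_mode_matrix)
  from this[unfolded tendsto_iff dist_norm, rule_format, of "cmod ?p / 2"] p_pos
  have close: "\<forall>\<^sub>F \<epsilon> in at_right 0.
      cmod (poly (char_poly (mode_matrix N (W_eps Wd \<epsilon>) \<alpha> k)) (c + of_real t) - ?p) < cmod ?p / 2"
    by simp
  show ?thesis
    using small close eventually_at_right_less[of 0]
  proof eventually_elim
    case (elim \<epsilon>)
    show ?case
    proof (intro allI impI)
      fix \<mu> assume cp: "\<forall>z. poly (char_poly (mode_matrix N (W_eps Wd \<epsilon>) \<alpha> k)) z = (\<Prod>i<N. z - \<mu> i)"
        and bounded: "\<forall>i<N. cmod (\<mu> i) \<le> 3/2"
      have "cmod ((\<Prod>i<N. c + of_real t - \<mu> i) - ?p) < cmod ?p / 2"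
        using elim(2) unfolding cp[rule_format] .
      moreover have "0 \<le> R * \<epsilon>" "R * \<epsilon> \<le> t" using R elim(1,3) by simp_all
      ultimately show "card {i. i < N \<and> cmod (\<mu> i - c) \<le> R * \<epsilon>} \<le> card {l\<in>{1..N}. ?d l = c}"
        using card_near_roots_le_multiplicity[OF N sep \<delta> t_def _ _ c_norm bounded] by blast
    qed
  qed
qed

lemma eventually_eigenvalues_near_rotation_phases:
  fixes Wd :: "nat \<Rightarrow> nat \<Rightarrow> real"
  assumes N: "1 \<le> N" and off: "\<forall>i\<in>{1..N}. \<forall>j\<in>{1..N}. i \<noteq> j \<longrightarrow> Wd i j \<ge> 0"
    and rows: "\<forall>i\<in>{1..N}. (\<Sum>j=1..N. Wd i j) = 0"
  shows "\<forall>\<^sub>F \<epsilon> in at_right 0. \<forall>\<mu>.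
           (\<forall>z. poly (char_poly (mode_matrix N (W_eps Wd \<epsilon>) \<alpha> k)) z = (\<Prod>i<N. z - \<mu> i))
       \<longrightarrow> (\<exists>g. bij_betw g {1..N} {0..<N} \<and>
              (\<forall>l\<in>{1..N}. cmod (\<mu> (g l) - rotation_phase k \<alpha> l) \<le> 2 * Max ((\<lambda>m. \<bar>Wd m m\<bar>) ` {1..N}) * \<epsilon>))"
proof -
  let ?d = "rotation_phase k \<alpha>"
  define M where "M = Max ((\<lambda>m. \<bar>Wd m m\<bar>) ` {1..N})"
  have M_ge: "\<bar>Wd l l\<bar> \<le> M" if "l \<in> {1..N}" for l using that by (auto simp: M_def)
  have "\<bar>Wd 1 1\<bar> \<le> M" using M_ge N by simp
  then have M: "0 \<le> M" by (rule order_trans[OF abs_ge_zero])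
  have counts: "\<forall>\<^sub>F \<epsilon> in at_right 0. \<forall>c\<in>?d ` {1..N}. \<forall>\<mu>.
           (\<forall>z. poly (char_poly (mode_matrix N (W_eps Wd \<epsilon>) \<alpha> k)) z = (\<Prod>i<N. z - \<mu> i))
       \<longrightarrow> (\<forall>i<N. cmod (\<mu> i) \<le> 3/2)
       \<longrightarrow> card {i. i < N \<and> cmod (\<mu> i - c) \<le> 2 * M * \<epsilon>} \<le> card {l\<in>{1..N}. ?d l = c}"
  proof (rule eventually_ball_finite, simp, rule ballI)
    fix c assume "c \<in> ?d ` {1..N}"
    then show "\<forall>\<^sub>F \<epsilon> in at_right 0. \<forall>\<mu>.
           (\<forall>z. poly (char_poly (mode_matrix N (W_eps Wd \<epsilon>) \<alpha> k)) z = (\<Prod>i<N. z - \<mu> i))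
       \<longrightarrow> (\<forall>i<N. cmod (\<mu> i) \<le> 3/2)
       \<longrightarrow> card {i. i < N \<and> cmod (\<mu> i - c) \<le> 2 * M * \<epsilon>} \<le> card {l\<in>{1..N}. ?d l = c}"
      by (rule eventually_card_near_eigenvalues_le_multiplicity[OF N]) (use M in simp)
  qed
  have "((\<lambda>\<epsilon>. 2 * M * \<epsilon>) \<longlongrightarrow> 2 * M * 0) (at_right 0)" by (intro tendsto_intros)
  then have small: "\<forall>\<^sub>F \<epsilon> in at_right 0. 2 * M * \<epsilon> < 1/2" by (intro order_tendstoD(2)) auto
  show ?thesis
    using counts small eventually_at_right_less[of 0] unfolding M_def[symmetric]
  proof eventually_elim
    case (elim \<epsilon>)
    show ?case
    proof (intro allI impI)
      fix \<mu> assume cp: "\<forall>z. poly (char_poly (mode_matrix N (W_eps Wd \<epsilon>) \<alpha> k)) z = (\<Prod>i<N. z - \<mu> i)"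
      have near: "\<exists>l\<in>{1..N}. cmod (\<mu> i - ?d l) \<le> 2 * M * \<epsilon>" if i: "i < N" for i
      proof -
        obtain l where "l \<in> {1..N}" "cmod (\<mu> i - ?d l) \<le> 2 * \<epsilon> * \<bar>Wd l l\<bar>"
          using char_poly_root_mode_matrix_near_rotation_phase[OF off rows less_imp_le[OF elim(3)] cp[rule_format] i]
          by blast
        moreover have "2 * \<epsilon> * \<bar>Wd l l\<bar> \<le> 2 * M * \<epsilon>" using M_ge[OF \<open>l \<in> {1..N}\<close>] elim(3) by simp
        ultimately show ?thesis by (intro bexI[of _ l]) auto
      qed
      have bounded: "\<forall>i<N. cmod (\<mu> i) \<le> 3/2"
      proof (intro allI impI)
        fix i assume "i < N"
        then obtain l where "l \<in> {1..N}" "cmod (\<mu> i - ?d l) \<le> 2 * M * \<epsilon>" using near by blast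
        then show "cmod (\<mu> i) \<le> 3/2"
          using elim(2) norm_triangle_ineq2[of "\<mu> i" "?d l"] by (simp add: norm_rotation_phase)
      qed
      obtain g where "bij_betw g {1..N} {0..<N}" "\<And>l. l \<in> {1..N} \<Longrightarrow> cmod (\<mu> (g l) - ?d l) \<le> 2 * M * \<epsilon>"
        using obtain_bij_betw_near_labelling[OF near elim(1)[rule_format, OF _ cp[rule_format] bounded[rule_format]]]
        by blast
      then show "\<exists>g. bij_betw g {1..N} {0..<N} \<and> (\<forall>l\<in>{1..N}. cmod (\<mu> (g l) - ?d l) \<le> 2 * M * \<epsilon>)"
        by blast
    qed
  qed
qed

theorem proposition2p2:
  fixes N :: nat and \<alpha> :: "nat \<Rightarrow> real" and Wd :: "nat \<Rightarrow> nat \<Rightarrow> real" and k :: int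
  assumes "N \<ge> 1"
    and "\<forall>i\<in>{1..N}. \<forall>j\<in>{1..N}. Wd i j = Wd j i"
    and "\<forall>i\<in>{1..N}. \<forall>j\<in>{1..N}. i \<noteq> j \<longrightarrow> Wd i j \<ge> 0"
    and "\<forall>i\<in>{1..N}. (\<Sum>j=1..N. Wd i j) = 0"
  shows "(\<forall>\<epsilon>>0. \<exists>lam f. sep_eigen_system N (W_eps Wd \<epsilon>) \<alpha> k lam f)
       \<and> (\<exists>\<epsilon>0>0. \<forall>\<epsilon>. 0 < \<epsilon> \<and> \<epsilon> < \<epsilon>0 \<longrightarrow>
            (\<exists>lam f. sep_eigen_system N (W_eps Wd \<epsilon>) \<alpha> k lam f \<and>
               (\<forall>l\<in>{1..N}. cmod (lam l - exp (- 2 * of_real pi * \<i> * of_int k * of_real (\<alpha> l)))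
                   \<le> 2 * Max ((\<lambda>m. \<bar>Wd m m\<bar>) ` {1..N}) * \<epsilon>)))"
proof -
  have "bij_betw (\<lambda>l. l - 1) {1..N} {0..<N}" by (rule bij_betw_byWitness[where f' = Suc]) auto
  then have part1: "\<exists>lam f. sep_eigen_system N (W_eps Wd \<epsilon>) \<alpha> k lam f" for \<epsilon>
    using sep_eigen_system_with_labelling[OF assms(1), where R = "\<lambda>_ _. True"] by blast
  have part2: "\<forall>\<^sub>F \<epsilon> in at_right 0. \<exists>lam f. sep_eigen_system N (W_eps Wd \<epsilon>) \<alpha> k lam f \<and>
      (\<forall>l\<in>{1..N}. cmod (lam l - rotation_phase k \<alpha> l) \<le> 2 * Max ((\<lambda>m. \<bar>Wd m m\<bar>) ` {1..N}) * \<epsilon>)"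
    using eventually_eigenvalues_near_rotation_phases[OF assms(1,3,4), where \<alpha> = \<alpha> and k = k]
  proof eventually_elim
    case (elim \<epsilon>)
    show ?case
      by (rule sep_eigen_system_with_labelling[OF assms(1), where
            R = "\<lambda>l z. cmod (z - rotation_phase k \<alpha> l) \<le> 2 * Max ((\<lambda>m. \<bar>Wd m m\<bar>) ` {1..N}) * \<epsilon>"])
        (use elim in blast)
  qed
  then show ?thesis using part1 unfolding eventually_at_right_field rotation_phase_def by blast
qed

end
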